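(* Let $(X,\mathscr{R},g)$ be a closed reversible reaction network with reaction energies $g\in\mathbb{R}^{\mathscr{R}}$. Then $(X,\mathscr{R},g)$ is thermodynamic if and only if it contains no perpetuum mobile.
   Context: A reaction network (RN) $(X,\mathscr{R})$ consists of a finite non-empty set $X$ of species and a finite non-empty set $\mathscr{R}$ of reactions. Each reaction $r$ is given by stoichiometric coefficients $s^-_{xr},s^+_{xr}\in\mathbb{N}_0$. The stoichiometric matrix $S\in\mathbb{Z}^{X\times\mathscr{R}}$ has entries $S_{xr}=s^+_{xr}-s^-_{xr}$. The RN is closed if every reaction $r$ has $x,y$ with $S_{xr}<0<S_{yr}$. The reverse $\bar r$ of $r$ has $s^-_{x\bar r}=s^+_{xr}$ and $s^+_{x\bar r}=s^-_{xr}$. The RN is reversible if $r\in\mathscr{R}$ implies $\bar r\in\mathscr{R}$. $(X,\mathscr{R},g)$ is thermodynamic if $g\in(\ker S)^\perp$. A perpetuum mobile is a vector $v\in\mathbb{R}^{\mathscr{R}}$ with all of the following: - $v\ge0$ and $v\ne0$; - $Sv=0$; - $\langle g,v\rangle\neq0$. *)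

theory Defs
  imports Main "HOL-Library.Multiset" Complex_Main
begin

text \<open>A reaction is given by its stoichiometric coefficients (s^-, s^+) on the species.
  Reactions are identified with their coefficient pairs.\<close>
type_synonym 'x reaction = "('x \<Rightarrow> nat) \<times> ('x \<Rightarrow> nat)"

definition reactants :: "'x reaction \<Rightarrow> 'x \<Rightarrow> nat" where
  "reactants r = fst r"

definition products :: "'x reaction \<Rightarrow> 'x \<Rightarrow> nat" where
  "products r = snd r"

definition reaction_network :: "'x set \<Rightarrow> 'x reaction set \<Rightarrow> bool" where
  "reaction_network X R \<longleftrightarrow> finite X \<and> X \<noteq> {} \<and> finite R \<and> R \<noteq> {} \<and>
     (\<forall>r\<in>R. \<forall>x. x \<notin> X \<longrightarrow> reactants r x = 0 \<and> products r x = 0)"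

definition stoich :: "'x reaction \<Rightarrow> 'x \<Rightarrow> int" where
  "stoich r x = int (products r x) - int (reactants r x)"

definition closed_RN :: "'x set \<Rightarrow> 'x reaction set \<Rightarrow> bool" where
  "closed_RN X R \<longleftrightarrow> (\<forall>r\<in>R. \<exists>x\<in>X. \<exists>y\<in>X. stoich r x < 0 \<and> 0 < stoich r y)"

definition reverse_reaction :: "'x reaction \<Rightarrow> 'x reaction" where
  "reverse_reaction r = (products r, reactants r)"

definition reversible_RN :: "'x reaction set \<Rightarrow> bool" where
  "reversible_RN R \<longleftrightarrow> (\<forall>r\<in>R. reverse_reaction r \<in> R)"

definition in_ker_S :: "'x set \<Rightarrow> 'x reaction set \<Rightarrow> ('x reaction \<Rightarrow> real) \<Rightarrow> bool" where
  "in_ker_S X R v \<longleftrightarrow> (\<forall>x\<in>X. (\<Sum>r\<in>R. real_of_int (stoich r x) * v r) = 0)"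

definition inner_R :: "'x reaction set \<Rightarrow> ('x reaction \<Rightarrow> real) \<Rightarrow> ('x reaction \<Rightarrow> real) \<Rightarrow> real" where
  "inner_R R g v = (\<Sum>r\<in>R. g r * v r)"

definition thermodynamic :: "'x set \<Rightarrow> 'x reaction set \<Rightarrow> ('x reaction \<Rightarrow> real) \<Rightarrow> bool" where
  "thermodynamic X R g \<longleftrightarrow> (\<forall>v. in_ker_S X R v \<longrightarrow> inner_R R g v = 0)"

definition perpetuum_mobile :: "'x set \<Rightarrow> 'x reaction set \<Rightarrow> ('x reaction \<Rightarrow> real) \<Rightarrow> ('x reaction \<Rightarrow> real) \<Rightarrow> bool" where
  "perpetuum_mobile X R g v \<longleftrightarrow>
     (\<forall>r\<in>R. v r \<ge> 0) \<and> (\<exists>r\<in>R. v r \<noteq> 0) \<and> in_ker_S X R v \<and> inner_R R g v \<noteq> 0"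

end

theory Submission
  imports Defs
begin

text \<open>Reversibility makes the energy function antisymmetric, g (reverse r) = - g r: the flux
  that runs r and its reverse once each lies in ker S, is nonnegative, and has energy
  g r + g (reverse r), which must vanish when there is no perpetuum mobile.  Conversely,
  every v \<in> ker S can be reoriented into a nonnegative flux by running each reaction with
  negative rate backwards; since both S and g are antisymmetric under reversal, this keeps
  S v and \<langle>g, v\<rangle> unchanged, so \<langle>g, v\<rangle> = 0 again follows from the absence of a perpetuum
  mobile.\<close>

lemma reverse_reaction_reverse_reaction [simp]: "reverse_reaction (reverse_reaction r) = r"
  by (simp add: reverse_reaction_def reactants_def products_def)

lemma stoich_reverse_reaction [simp]: "stoich (reverse_reaction r) x = - stoich r x"
  by (simp add: reverse_reaction_def reactants_def products_def stoich_def)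

lemma bij_betw_reverse_reaction:
  assumes "reversible_RN R"
  shows "bij_betw reverse_reaction R R"
  using assms unfolding reversible_RN_def
  by (intro bij_betw_byWitness[where f' = reverse_reaction]) auto

lemma sum_reverse_reaction:
  assumes "reversible_RN R"
  shows "(\<Sum>r\<in>R. h (reverse_reaction r)) = (\<Sum>r\<in>R. h r)"
  using sum.reindex_bij_betw[OF bij_betw_reverse_reaction[OF assms]] .

definition reorient_flux :: "('x reaction \<Rightarrow> real) \<Rightarrow> 'x reaction \<Rightarrow> real" where
  "reorient_flux v r = max (v r) 0 + max (- v (reverse_reaction r)) 0"

lemma reorient_flux_nonneg: "reorient_flux v r \<ge> 0"
  by (simp add: reorient_flux_def)

lemma sum_reorient_flux:
  assumes "reversible_RN R" and antisym: "\<And>r. r \<in> R \<Longrightarrow> f (reverse_reaction r) = - f r"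
  shows "(\<Sum>r\<in>R. f r * reorient_flux v r) = (\<Sum>r\<in>R. f r * v r)"
proof -
  define N where "N r = max (- v r) 0" for r
  have "(\<Sum>r\<in>R. f r * N (reverse_reaction r))
      = (\<Sum>r\<in>R. f (reverse_reaction r) * N r)"
    using sum_reverse_reaction[OF assms(1), of "\<lambda>r. f (reverse_reaction r) * N r"] by simp
  also have "\<dots> = (\<Sum>r\<in>R. - f r * N r)"
    by (rule sum.cong) (simp_all add: antisym)
  finally have "(\<Sum>r\<in>R. f r * N (reverse_reaction r)) = - (\<Sum>r\<in>R. f r * N r)"
    by (simp add: sum_negf)
  moreover have "(\<Sum>r\<in>R. f r * v r) = (\<Sum>r\<in>R. f r * max (v r) 0) - (\<Sum>r\<in>R. f r * N r)"
    unfolding sum_subtractf[symmetric] by (rule sum.cong) (simp_all add: N_def max_def algebra_simps)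
  ultimately show ?thesis
    unfolding reorient_flux_def N_def[symmetric]
    by (simp add: distrib_left sum.distrib)
qed

lemma in_ker_S_reorient_flux:
  assumes "reversible_RN R" and "in_ker_S X R v"
  shows "in_ker_S X R (reorient_flux v)"
  using assms sum_reorient_flux[OF assms(1), of "\<lambda>r. real_of_int (stoich r _)"]
  by (simp add: in_ker_S_def)

lemma inner_R_reorient_flux:
  assumes "reversible_RN R" and "\<And>r. r \<in> R \<Longrightarrow> g (reverse_reaction r) = - g r"
  shows "inner_R R g (reorient_flux v) = inner_R R g v"
  unfolding inner_R_def using sum_reorient_flux[of R g] assms by blast

lemma inner_R_nonneg_kernel_eq_0:
  assumes "\<not> (\<exists>v. perpetuum_mobile X R g v)"
    and "\<And>r. r \<in> R \<Longrightarrow> w r \<ge> 0" and "in_ker_S X R w"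
  shows "inner_R R g w = 0"
proof (cases "\<exists>r\<in>R. w r \<noteq> 0")
  case True
  with assms show ?thesis
    unfolding perpetuum_mobile_def by blast
qed (simp add: inner_R_def)

lemma energy_reverse_reaction:
  assumes "reaction_network X R" and "reversible_RN R"
    and "\<not> (\<exists>v. perpetuum_mobile X R g v)" and "r \<in> R"
  shows "g (reverse_reaction r) = - g r"
proof -
  define u :: "_ \<Rightarrow> real"
    where "u s = of_bool (s = r) + of_bool (s = reverse_reaction r)" for s
  have "finite R"
    using assms(1) by (simp add: reaction_network_def)
  moreover have "reverse_reaction r \<in> R"
    using assms(2,4) by (simp add: reversible_RN_def)
  ultimately have sum_u: "(\<Sum>s\<in>R. h s * u s) = h r + h (reverse_reaction r)" for h
    using assms(4) by (simp add: u_def distrib_left sum.distrib)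
  have "in_ker_S X R u"
    by (simp add: in_ker_S_def sum_u)
  then have "inner_R R g u = 0"
    using inner_R_nonneg_kernel_eq_0[OF assms(3)] by (simp add: u_def)
  then show ?thesis
    by (simp add: inner_R_def sum_u)
qed

theorem proposition2:
  fixes X :: "'x set" and R :: "'x reaction set" and g :: "'x reaction \<Rightarrow> real"
  assumes "reaction_network X R"
    and "closed_RN X R"
    and "reversible_RN R"
  shows "thermodynamic X R g \<longleftrightarrow> \<not> (\<exists>v. perpetuum_mobile X R g v)"
proof
  assume "thermodynamic X R g"
  then show "\<not> (\<exists>v. perpetuum_mobile X R g v)"
    unfolding thermodynamic_def perpetuum_mobile_def by blast
next
  assume no_pm: "\<not> (\<exists>v. perpetuum_mobile X R g v)"
  have g_antisym: "g (reverse_reaction r) = - g r" if "r \<in> R" for r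
    using energy_reverse_reaction[OF assms(1,3) no_pm that] .
  show "thermodynamic X R g"
    unfolding thermodynamic_def
  proof (intro allI impI)
    fix v assume "in_ker_S X R v"
    then have "inner_R R g (reorient_flux v) = 0"
      using inner_R_nonneg_kernel_eq_0[OF no_pm] reorient_flux_nonneg
        in_ker_S_reorient_flux[OF assms(3)] by blast
    then show "inner_R R g v = 0"
      using inner_R_reorient_flux[of R g] assms(3) g_antisym by simp
  qed
qed

end
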